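(* Let $A,B,C$ be real $k\times m$ matrices with $A=B+C$, let $r$ be a positive integer with $2r\le\min(k,m)$, and let $A=\sum_i\sigma_i(A)u_iv_i^{\intercal}$ be a singular value decomposition of $A$ (singular values non-increasing, $\{u_i\}$ and $\{v_i\}$ orthonormal). Let $\beta\ge0$ be such that $\sigma_{r+1}(B)\le\beta$ and $\|Cv_i\|\le2\beta$ for all $i\in[2r]$. Then $\sigma_{2r}(A)\le4\beta$.
   Context: $\sigma_i(\cdot)$ is the $i$-th largest singular value and $\|\cdot\|$ the Euclidean norm of a vector. *)

theory Defs
  imports "HOL-Analysis.Analysis"
begin

text \<open>Real k x m matrices are rendered as real^'m^'k (k rows, m columns).
  Singular values and singular vectors are indexed by 1..min(k,m).\<close>

definition outer_prod :: "real^'k \<Rightarrow> real^'m \<Rightarrow> real^'m^'k" where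
  "outer_prod x y = (\<chi> a b. x $ a * y $ b)"

definition is_svd :: "real^'m^'k \<Rightarrow> (nat \<Rightarrow> real) \<Rightarrow> (nat \<Rightarrow> real^'k) \<Rightarrow> (nat \<Rightarrow> real^'m) \<Rightarrow> bool" where
  "is_svd A s u v \<longleftrightarrow>
     (let p = min CARD('k) CARD('m) in
       (\<forall>i. (i < 1 \<or> p < i) \<longrightarrow> s i = 0) \<and>
       (\<forall>i\<in>{1..p}. 0 \<le> s i) \<and>
       (\<forall>i j. 1 \<le> i \<longrightarrow> i \<le> j \<longrightarrow> j \<le> p \<longrightarrow> s j \<le> s i) \<and>
       (\<forall>i\<in>{1..p}. \<forall>j\<in>{1..p}. u i \<bullet> u j = (if i = j then 1 else 0)) \<and>
       (\<forall>i\<in>{1..p}. \<forall>j\<in>{1..p}. v i \<bullet> v j = (if i = j then 1 else 0)) \<and>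
       A = (\<Sum>i=1..p. s i *\<^sub>R outer_prod (u i) (v i)))"

text \<open>sigma A i: the i-th largest singular value of A (the coefficient sequence of an SVD,
  which is uniquely determined by A).\<close>
definition sigma :: "real^'m^'k \<Rightarrow> nat \<Rightarrow> real" where
  "sigma A = (SOME s. \<exists>u v. is_svd A s u v)"

end

theory Submission
  imports Defs
begin

(* Let s = sigma A (2r) and suppose s > 4 beta.  The span W of v_1, ..., v_2r has
   dimension 2r, so it contains an orthonormal set X of r vectors orthogonal to the top r
   right singular vectors of B.  For a unit vector x in X we have |Ax| >= s and
   |Bx| <= sigma B (r+1) <= beta, hence |Cx| >= s - beta.  Summing squares over X and
   bounding by the Frobenius norm of C restricted to W gives
   r (s - beta)^2 <= sum_{i <= 2r} |C v_i|^2 <= 8 r beta^2, i.e. s <= (1 + 2 sqrt 2) beta.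
   Since sigma B is defined by choice, the argument needs an SVD of B to exist; it is built
   greedily, each right singular vector maximising |Bx| / |x| on the orthogonal complement
   of the previous ones. *)

section \<open>Orthonormal families\<close>

definition orthonormal_on :: "'i set \<Rightarrow> ('i \<Rightarrow> 'a::real_inner) \<Rightarrow> bool" where
  "orthonormal_on I v \<longleftrightarrow> (\<forall>i\<in>I. \<forall>j\<in>I. v i \<bullet> v j = (if i = j then 1 else 0))"

lemma orthonormal_on_subset: "orthonormal_on I v \<Longrightarrow> J \<subseteq> I \<Longrightarrow> orthonormal_on J v"
  unfolding orthonormal_on_def by blast

lemma orthonormal_on_inj: "orthonormal_on I v \<Longrightarrow> inj_on v I"
  unfolding orthonormal_on_def inj_on_def by (metis one_neq_zero)

lemma orthonormal_on_id_iff: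
  "orthonormal_on X id \<longleftrightarrow> pairwise orthogonal X \<and> (\<forall>x\<in>X. norm x = 1)"
  unfolding orthonormal_on_def pairwise_def orthogonal_def by (auto simp: norm_eq_1)

lemma orthonormal_on_normalized:
  assumes "\<forall>i\<in>I. w i \<noteq> 0" "\<forall>i\<in>I. \<forall>j\<in>I. i \<noteq> j \<longrightarrow> w i \<bullet> w j = 0"
  shows "orthonormal_on I (\<lambda>i. w i /\<^sub>R norm (w i))"
  using assms unfolding orthonormal_on_def by (auto simp: dot_square_norm power2_eq_square field_simps)

lemma orthonormal_on_independent:
  assumes "orthonormal_on I v"
  shows "independent (v ` I)"
proof (rule pairwise_orthogonal_independent)
  show "pairwise orthogonal (v ` I)"
    using assms unfolding orthonormal_on_def pairwise_def orthogonal_def by auto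
  show "0 \<notin> v ` I"
    using assms unfolding orthonormal_on_def by force
qed

lemma card_le_DIM_if_orthogonal_nonzero:
  fixes w :: "'i \<Rightarrow> 'a::euclidean_space"
  assumes "\<forall>i\<in>I. w i \<noteq> 0" "\<forall>i\<in>I. \<forall>j\<in>I. i \<noteq> j \<longrightarrow> w i \<bullet> w j = 0"
  shows "card I \<le> DIM('a)"
proof -
  let ?u = "\<lambda>i. w i /\<^sub>R norm (w i)"
  have "orthonormal_on I ?u" using assms by (rule orthonormal_on_normalized)
  then have "card I = card (?u ` I)" "independent (?u ` I)"
    by (simp_all add: card_image orthonormal_on_inj orthonormal_on_independent)
  then show ?thesis using independent_bound by auto
qed

lemma inner_sum_orthonormal:
  assumes "orthonormal_on I v" "finite I" "j \<in> I"
  shows "v j \<bullet> (\<Sum>i\<in>I. c i *\<^sub>R v i) = c j"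
proof -
  have "v j \<bullet> (\<Sum>i\<in>I. c i *\<^sub>R v i) = (\<Sum>i\<in>I. if j = i then c i else 0)"
    unfolding inner_sum_right using assms by (intro sum.cong) (auto simp: orthonormal_on_def)
  also have "\<dots> = c j" using assms by simp
  finally show ?thesis .
qed

lemma inner_sums_orthonormal:
  assumes "orthonormal_on I v" "finite I"
  shows "(\<Sum>i\<in>I. c i *\<^sub>R v i) \<bullet> (\<Sum>i\<in>I. d i *\<^sub>R v i) = (\<Sum>i\<in>I. c i * d i)"
  using assms by (simp add: inner_sum_left inner_sum_orthonormal)

lemma norm_sum_orthonormal:
  assumes "orthonormal_on I v" "finite I"
  shows "(norm (\<Sum>i\<in>I. c i *\<^sub>R v i))\<^sup>2 = (\<Sum>i\<in>I. (c i)\<^sup>2)"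
  unfolding power2_norm_eq_inner using inner_sums_orthonormal[OF assms, of c c]
  by (simp add: power2_eq_square)

lemma bessel_inequality:
  assumes "orthonormal_on I v" "finite I"
  shows "(\<Sum>i\<in>I. (v i \<bullet> x)\<^sup>2) \<le> (norm x)\<^sup>2"
proof -
  define p where "p = (\<Sum>i\<in>I. (v i \<bullet> x) *\<^sub>R v i)"
  define S where "S = (\<Sum>i\<in>I. (v i \<bullet> x)\<^sup>2)"
  have pp: "p \<bullet> p = S"
    unfolding p_def S_def using inner_sums_orthonormal[OF assms] by (simp add: power2_eq_square)
  have xp: "x \<bullet> p = S"
    unfolding p_def S_def by (simp add: inner_sum_right power2_eq_square inner_commute)
  have "0 \<le> (x - p) \<bullet> (x - p)" by simp
  also have "\<dots> = x \<bullet> x - 2 * (x \<bullet> p) + p \<bullet> p"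
    by (simp add: inner_diff_left inner_diff_right inner_commute)
  finally show ?thesis using pp xp by (simp add: power2_norm_eq_inner S_def)
qed

lemma span_orthonormal_expansion:
  assumes "orthonormal_on I v" "finite I" "x \<in> span (v ` I)"
  shows "x = (\<Sum>i\<in>I. (v i \<bullet> x) *\<^sub>R v i)"
proof -
  define y where "y = x - (\<Sum>i\<in>I. (v i \<bullet> x) *\<^sub>R v i)"
  have "y \<in> span (v ` I)"
    unfolding y_def using assms(3) by (intro span_diff span_sum span_scale) (auto intro: span_base)
  moreover have "orthogonal y (v j)" if "j \<in> I" for j
  proof -
    have "v j \<bullet> y = 0"
      unfolding y_def using inner_sum_orthonormal[OF assms(1,2) that, of "\<lambda>i. v i \<bullet> x"]
      by (simp add: inner_diff_right)
    then show ?thesis by (simp add: orthogonal_def inner_commute)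
  qed
  ultimately have "orthogonal y y" using orthogonal_to_span by fast
  then have "y = 0" by (simp add: orthogonal_def)
  then show ?thesis by (simp add: y_def)
qed

lemma norm_span_orthonormal:
  assumes "orthonormal_on I v" "finite I" "x \<in> span (v ` I)"
  shows "(norm x)\<^sup>2 = (\<Sum>i\<in>I. (v i \<bullet> x)\<^sup>2)"
  using norm_sum_orthonormal[OF assms(1,2)] span_orthonormal_expansion[OF assms] by metis

lemma exists_unit_orthogonal:
  fixes S :: "'a::euclidean_space set"
  assumes "finite S" "card S < DIM('a)"
  obtains y where "norm y = 1" "\<And>x. x \<in> S \<Longrightarrow> x \<bullet> y = 0"
proof -
  have "dim S < DIM('a)" using dim_le_card'[OF assms(1)] assms(2) by simp
  then obtain z where "z \<noteq> 0" "\<And>x. x \<in> span S \<Longrightarrow> orthogonal z x"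
    using orthogonal_to_subspace_exists by blast
  then show ?thesis
    by (intro that[of "z /\<^sub>R norm z"]) (auto simp: orthogonal_def inner_commute span_base)
qed

lemma orthonormal_on_insert:
  assumes "orthonormal_on I u" "a \<notin> I" "norm y = 1" "\<And>i. i \<in> I \<Longrightarrow> u i \<bullet> y = 0"
  shows "orthonormal_on (insert a I) (u(a := y))"
  using assms unfolding orthonormal_on_def by (auto simp: norm_eq_1 inner_commute)

lemma orthonormal_on_extend:
  fixes u :: "'i \<Rightarrow> 'a::euclidean_space"
  assumes "finite J" "finite I" "card (I \<union> J) \<le> DIM('a)" "orthonormal_on I u"
  obtains u' where "orthonormal_on (I \<union> J) u'" "\<forall>i\<in>I. u' i = u i"
proof -
  have "\<exists>u'. orthonormal_on (I \<union> J) u' \<and> (\<forall>i\<in>I. u' i = u i)"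
    using assms(1,3)
  proof (induction J rule: finite_induct)
    case empty
    then show ?case using assms(4) by auto
  next
    case (insert a J)
    have "card (I \<union> J) \<le> card (I \<union> insert a J)"
      using insert(1) assms(2) by (intro card_mono) auto
    then obtain u' where u': "orthonormal_on (I \<union> J) u'" "\<forall>i\<in>I. u' i = u i"
      using insert by auto
    show ?case
    proof (cases "a \<in> I \<union> J")
      case True
      then show ?thesis using u' by (auto simp: insert_absorb)
    next
      case False
      have fin: "finite (I \<union> J)" using insert(1) assms(2) by simp
      then have "card (u' ` (I \<union> J)) < card (I \<union> insert a J)"
        using False card_image_le[OF fin, of u'] by (simp add: card_insert_disjoint)
      then have card: "card (u' ` (I \<union> J)) < DIM('a)" using insert.prems by linarith
      obtain y where "norm y = 1" "\<And>x. x \<in> u' ` (I \<union> J) \<Longrightarrow> x \<bullet> y = 0"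
        using exists_unit_orthogonal[OF finite_imageI[OF fin] card] by blast
      then have "orthonormal_on (insert a (I \<union> J)) (u'(a := y))"
        using False by (intro orthonormal_on_insert[OF u'(1)]) auto
      then show ?thesis using u'(2) False by auto
    qed
  qed
  then show ?thesis using that by blast
qed

lemma orthogonal_family_polar:
  fixes w :: "'i \<Rightarrow> 'a::euclidean_space"
  assumes "finite I" "card I \<le> DIM('a)" "\<forall>i\<in>I. \<forall>j\<in>I. i \<noteq> j \<longrightarrow> w i \<bullet> w j = 0"
  obtains u where "orthonormal_on I u" "\<And>i. i \<in> I \<Longrightarrow> w i = norm (w i) *\<^sub>R u i"
proof -
  define I0 where "I0 = {i\<in>I. w i \<noteq> 0}"
  have on0: "orthonormal_on I0 (\<lambda>i. w i /\<^sub>R norm (w i))"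
    using assms(3) by (intro orthonormal_on_normalized) (auto simp: I0_def)
  have eq: "I0 \<union> (I - I0) = I" and fin0: "finite I0" using assms(1) by (auto simp: I0_def)
  then have card: "card (I0 \<union> (I - I0)) \<le> DIM('a)" using assms(2) by simp
  obtain u where u: "orthonormal_on (I0 \<union> (I - I0)) u" "\<forall>i\<in>I0. u i = w i /\<^sub>R norm (w i)"
    using orthonormal_on_extend[OF finite_Diff[OF assms(1)] fin0 card on0] by blast
  show ?thesis
  proof (rule that)
    show "orthonormal_on I u" using u(1) unfolding eq .
    show "w i = norm (w i) *\<^sub>R u i" if "i \<in> I" for i
      using that u(2) by (cases "w i = 0") (auto simp: I0_def)
  qed
qed

lemma dim_le_dim_orthogonal_part:
  fixes S A :: "'a::euclidean_space set"
  assumes "subspace S" "subspace A"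
  shows "dim S \<le> dim {y \<in> S. \<forall>x\<in>A. orthogonal x y} + dim A"
proof -
  define T where "T = {y. \<forall>x\<in>A. orthogonal x y}"
  have "subspace T"
    unfolding T_def subspace_def orthogonal_def by (auto simp: inner_add_right)
  have "S \<inter> T = {y \<in> S. \<forall>x\<in>A. orthogonal x y}" by (auto simp: T_def)
  then have "dim {x + y |x y. x \<in> S \<and> y \<in> T} + dim {y \<in> S. \<forall>x\<in>A. orthogonal x y} = dim S + dim T"
    using dim_sums_Int[OF assms(1) \<open>subspace T\<close>] by simp
  moreover have "dim T + dim A = DIM('a)"
    using dim_subspace_orthogonal_to_vectors[OF assms(2) subspace_UNIV] by (simp add: T_def)
  moreover have "dim {x + y |x y. x \<in> S \<and> y \<in> T} \<le> DIM('a)" by (rule dim_subset_UNIV)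
  ultimately show ?thesis by linarith
qed

lemma obtain_orthonormal_in_span_orthogonal:
  fixes v :: "'i \<Rightarrow> 'a::euclidean_space"
  assumes "orthonormal_on I v" "finite I" "finite W" "r + card W \<le> card I"
  obtains X where "card X = r" "orthonormal_on X id" "X \<subseteq> span (v ` I)"
    "\<And>x w. x \<in> X \<Longrightarrow> w \<in> W \<Longrightarrow> w \<bullet> x = 0"
proof -
  define U where "U = {y \<in> span (v ` I). \<forall>x\<in>span W. orthogonal x y}"
  have "subspace U"
    unfolding U_def subspace_def orthogonal_def by (auto simp: span_zero span_add span_scale inner_add_right)
  have "dim (span (v ` I)) = card I"
    using dim_span_eq_card_independent[OF orthonormal_on_independent[OF assms(1)]]
      card_image[OF orthonormal_on_inj[OF assms(1)]] by simp
  moreover have "dim (span W) \<le> card W" by (simp add: dim_le_card' assms(3))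
  ultimately have "r \<le> dim U"
    using dim_le_dim_orthogonal_part[of "span (v ` I)" "span W"] assms(4) by (simp add: U_def)
  obtain B where B: "B \<subseteq> U" "pairwise orthogonal B" "\<And>x. x \<in> B \<Longrightarrow> norm x = 1" "card B = dim U"
    using orthonormal_basis_subspace[OF \<open>subspace U\<close>] by metis
  obtain X where X: "X \<subseteq> B" "card X = r"
    using obtain_subset_with_card_n[of r B] \<open>r \<le> dim U\<close> B(4) by metis
  have "orthonormal_on X id"
    using X(1) B(3) pairwise_subset[OF B(2) X(1)] by (auto simp: orthonormal_on_id_iff)
  moreover have "X \<subseteq> U" using X(1) B(1) by blast
  ultimately show ?thesis
  proof (intro that[OF X(2)])
    show "X \<subseteq> span (v ` I)" using \<open>X \<subseteq> U\<close> by (auto simp: U_def)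
    show "w \<bullet> x = 0" if "x \<in> X" "w \<in> W" for x w
    proof -
      have "\<forall>z\<in>span W. orthogonal z x" using \<open>X \<subseteq> U\<close> that(1) by (auto simp: U_def)
      then show ?thesis using span_base[OF that(2)] by (simp add: orthogonal_def)
    qed
  qed
qed

section \<open>Existence of singular value decompositions\<close>

lemma linear_coeff_eq_0_if_quadratic_nonpos:
  fixes a c :: real
  assumes "\<And>t. a * t + c * t\<^sup>2 \<le> 0"
  shows "a = 0"
proof -
  define d where "d = \<bar>c\<bar> + 1"
  have "d > 0" "d + c > 0" by (auto simp: d_def)
  have "a * (a / d) + c * (a / d)\<^sup>2 = a\<^sup>2 * (d + c) / d\<^sup>2"
    using \<open>d > 0\<close> by (simp add: field_simps power2_eq_square)
  then have "a\<^sup>2 * (d + c) \<le> 0"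
    using assms[of "a / d"] \<open>d > 0\<close> by (simp add: divide_le_0_iff)
  then have "a\<^sup>2 \<le> 0" using \<open>d + c > 0\<close> by (simp add: mult_le_0_iff)
  then show ?thesis by simp
qed

lemma linear_maximizer_orthogonal_image:
  fixes f :: "'a::real_inner \<Rightarrow> 'b::real_inner"
  assumes "linear f" "norm v = 1" "v \<bullet> x = 0"
    and max: "\<And>t. norm (f (v + t *\<^sub>R x)) \<le> norm (f v) * norm (v + t *\<^sub>R x)"
  shows "f v \<bullet> f x = 0"
proof -
  have "(2 * (f v \<bullet> f x)) * t + ((norm (f x))\<^sup>2 - (norm (f v))\<^sup>2 * (norm x)\<^sup>2) * t\<^sup>2 \<le> 0" for t
  proof -
    have "(norm (f (v + t *\<^sub>R x)))\<^sup>2 \<le> (norm (f v) * norm (v + t *\<^sub>R x))\<^sup>2"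
      using max[of t] by (simp add: power_mono)
    moreover have "f (v + t *\<^sub>R x) = f v + t *\<^sub>R f x"
      using assms(1) by (simp add: linear_add linear_scale)
    then have "(norm (f (v + t *\<^sub>R x)))\<^sup>2 = (norm (f v))\<^sup>2 + 2 * t * (f v \<bullet> f x) + t\<^sup>2 * (norm (f x))\<^sup>2"
      unfolding power2_norm_eq_inner
      by (simp add: inner_add_left inner_add_right inner_commute power2_eq_square algebra_simps)
    moreover have "(norm (v + t *\<^sub>R x))\<^sup>2 = 1 + t\<^sup>2 * (norm x)\<^sup>2"
      using assms(2,3) unfolding power2_norm_eq_inner
      by (simp add: inner_add_left inner_add_right inner_commute power2_eq_square algebra_simps
          norm_eq_1)
    ultimately show ?thesis by (simp add: power_mult_distrib algebra_simps)
  qed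
  then have "2 * (f v \<bullet> f x) = 0" by (rule linear_coeff_eq_0_if_quadratic_nonpos)
  then show ?thesis by simp
qed

lemma linear_norm_attains_max_on_subspace:
  fixes f :: "'a::euclidean_space \<Rightarrow> 'b::real_normed_vector"
  assumes "linear f" "subspace S" "z \<in> S" "z \<noteq> 0"
  obtains y where "y \<in> S" "norm y = 1" "\<And>x. x \<in> S \<Longrightarrow> norm (f x) \<le> norm (f y) * norm x"
proof -
  define K where "K = S \<inter> sphere 0 1"
  have "compact K"
    unfolding K_def using closed_subspace[OF assms(2)] by (simp add: closed_Int_compact)
  moreover have "z /\<^sub>R norm z \<in> K"
    unfolding K_def using assms(2-4) by (simp add: subspace_scale)
  moreover have "continuous_on K (\<lambda>x. norm (f x))"
    using assms(1) by (intro continuous_on_norm linear_continuous_on linear_conv_bounded_linear[THEN iffD1])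
  ultimately obtain y where y: "y \<in> K" "\<And>x. x \<in> K \<Longrightarrow> norm (f x) \<le> norm (f y)"
    using continuous_attains_sup[of K "\<lambda>x. norm (f x)"] by blast
  have "norm (f x) \<le> norm (f y) * norm x" if "x \<in> S" for x
  proof (cases "x = 0")
    case True
    then show ?thesis using assms(1) by (simp add: linear_0)
  next
    case False
    then have "x /\<^sub>R norm x \<in> K" unfolding K_def using that assms(2) by (simp add: subspace_scale)
    then have "norm (f x) / norm x \<le> norm (f y)"
      using y(2) assms(1) by (fastforce simp: linear_scale divide_inverse mult.commute)
    then show ?thesis using False by (simp add: divide_le_eq mult.commute)
  qed
  then show ?thesis using y(1) that by (auto simp: K_def)
qed

definition greedy_max_direction ::
    "('a::real_inner \<Rightarrow> 'b::real_normed_vector) \<Rightarrow> (nat \<Rightarrow> 'a) \<Rightarrow> nat \<Rightarrow> bool" where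
  "greedy_max_direction f v i \<longleftrightarrow> norm (v i) = 1 \<and> (\<forall>j\<in>{1..<i}. v j \<bullet> v i = 0) \<and>
     (\<forall>x. (\<forall>j\<in>{1..<i}. v j \<bullet> x = 0) \<longrightarrow> norm (f x) \<le> norm (f (v i)) * norm x)"

lemma greedy_max_direction_cong:
  "(\<And>j. j \<le> i \<Longrightarrow> v' j = v j) \<Longrightarrow> greedy_max_direction f v' i = greedy_max_direction f v i"
  unfolding greedy_max_direction_def by auto

lemma greedy_max_directions_exist:
  fixes f :: "'a::euclidean_space \<Rightarrow> 'b::real_normed_vector"
  assumes "linear f" "d \<le> DIM('a)"
  shows "\<exists>v. \<forall>i\<in>{1..d}. greedy_max_direction f v i"
  using assms(2)
proof (induction d)
  case 0
  then show ?case by simp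
next
  case (Suc d)
  then obtain v where v: "\<forall>i\<in>{1..d}. greedy_max_direction f v i" by auto
  define S where "S = {x. \<forall>j\<in>{1..d}. v j \<bullet> x = 0}"
  have "subspace S"
    unfolding S_def subspace_def by (auto simp: inner_add_right)
  have "card (v ` {1..d}) < DIM('a)"
    using card_image_le[of "{1..d}" v] Suc.prems by simp
  then obtain z where "norm z = 1" "\<And>x. x \<in> v ` {1..d} \<Longrightarrow> x \<bullet> z = 0"
    using exists_unit_orthogonal[of "v ` {1..d}"] by blast
  then have "z \<in> S" "z \<noteq> 0" by (auto simp: S_def)
  then obtain y where y: "y \<in> S" "norm y = 1" "\<And>x. x \<in> S \<Longrightarrow> norm (f x) \<le> norm (f y) * norm x"
    using linear_norm_attains_max_on_subspace[OF assms(1) \<open>subspace S\<close>] by metis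
  have "greedy_max_direction f (v(Suc d := y)) i" if "i \<in> {1..Suc d}" for i
  proof (cases "i = Suc d")
    case False
    then have "greedy_max_direction f v i" using v that by auto
    then show ?thesis using False that by (subst greedy_max_direction_cong) auto
  next
    case True
    then show ?thesis using y by (auto simp: greedy_max_direction_def S_def)
  qed
  then show ?case by blast
qed

context
  fixes f :: "'a::real_inner \<Rightarrow> 'b::real_inner" and v :: "nat \<Rightarrow> 'a" and n :: nat
  assumes greedy: "\<forall>i\<in>{1..n}. greedy_max_direction f v i"
begin

lemma greedy_max_directions_orthonormal: "orthonormal_on {1..n} v"
  unfolding orthonormal_on_def
proof (intro ballI)
  fix i j assume "i \<in> {1..n}" "j \<in> {1..n}"
  then have "greedy_max_direction f v i" "greedy_max_direction f v j" using greedy by auto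
  then show "v i \<bullet> v j = (if i = j then 1 else 0)"
    using \<open>i \<in> {1..n}\<close> \<open>j \<in> {1..n}\<close> by (cases i j rule: linorder_cases)
      (auto simp: greedy_max_direction_def norm_eq_1 inner_commute)
qed

lemma greedy_max_directions_norm_antimono:
  assumes "1 \<le> i" "i \<le> j" "j \<le> n"
  shows "norm (f (v j)) \<le> norm (f (v i))"
proof -
  have "greedy_max_direction f v i" "greedy_max_direction f v j" using greedy assms by auto
  then show ?thesis
    using assms unfolding greedy_max_direction_def
    by (metis atLeastLessThan_iff le_less_trans mult.right_neutral order.refl order_le_less)
qed

lemma greedy_max_directions_images_orthogonal:
  assumes "linear f" "1 \<le> i" "i < j" "j \<le> n"
  shows "f (v i) \<bullet> f (v j) = 0"
proof (rule linear_maximizer_orthogonal_image[OF assms(1)])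
  have gi: "greedy_max_direction f v i" and gj: "greedy_max_direction f v j" using greedy assms by auto
  then show "norm (v i) = 1" "v i \<bullet> v j = 0"
    using assms by (auto simp: greedy_max_direction_def)
  fix t :: real
  have "\<forall>l\<in>{1..<i}. v l \<bullet> (v i + t *\<^sub>R v j) = 0"
    using gi gj assms by (auto simp: greedy_max_direction_def inner_add_right)
  then show "norm (f (v i + t *\<^sub>R v j)) \<le> norm (f (v i)) * norm (v i + t *\<^sub>R v j)"
    using gi by (simp add: greedy_max_direction_def)
qed

end

lemma orthogonal_antimono_family_vanishes:
  fixes w :: "nat \<Rightarrow> 'a::euclidean_space"
  assumes antimono: "\<And>i j. 1 \<le> i \<Longrightarrow> i \<le> j \<Longrightarrow> j \<le> n \<Longrightarrow> norm (w j) \<le> norm (w i)"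
    and orth: "\<And>i j. 1 \<le> i \<Longrightarrow> i < j \<Longrightarrow> j \<le> n \<Longrightarrow> w i \<bullet> w j = 0"
    and "DIM('a) < k" "k \<le> n"
  shows "w k = 0"
proof (rule ccontr)
  assume "w k \<noteq> 0"
  then have "\<forall>j\<in>{1..k}. w j \<noteq> 0"
    using antimono assms(4) by (metis atLeastAtMost_iff norm_le_zero_iff order_trans)
  moreover have "\<forall>i\<in>{1..k}. \<forall>j\<in>{1..k}. i \<noteq> j \<longrightarrow> w i \<bullet> w j = 0"
    using orth assms(4) by (metis atLeastAtMost_iff inner_commute linorder_neqE_nat order_trans)
  ultimately have "card {1..k} \<le> DIM('a)" by (rule card_le_DIM_if_orthogonal_nonzero)
  then show False using assms(3) by simp
qed

lemma scaleR_outer_prod_mult_vec: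
  "(c *\<^sub>R outer_prod u v) *v x = (c * (v \<bullet> x)) *\<^sub>R u"
  by (simp add: vec_eq_iff outer_prod_def matrix_vector_mult_def inner_vec_def
      sum_distrib_left sum_distrib_right mult_ac)

lemma sum_outer_prod_mult_vec:
  "(\<Sum>i\<in>I. s i *\<^sub>R outer_prod (u i) (v i)) *v x = (\<Sum>i\<in>I. (s i * (v i \<bullet> x)) *\<^sub>R u i)"
  by (induction I rule: infinite_finite_induct)
    (simp_all add: matrix_vector_mult_add_rdistrib scaleR_outer_prod_mult_vec)

lemma matrix_eq_sum_outer_prod:
  fixes B :: "real^'m^'k"
  assumes "orthonormal_on {1..CARD('m)} v" "p \<le> CARD('m)"
    and "\<And>i. i \<in> {1..p} \<Longrightarrow> B *v v i = s i *\<^sub>R u i"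
    and "\<And>i. i \<in> {p<..CARD('m)} \<Longrightarrow> B *v v i = 0"
  shows "B = (\<Sum>i=1..p. s i *\<^sub>R outer_prod (u i) (v i))"
  unfolding matrix_eq
proof
  fix x :: "real^'m"
  have "dim (v ` {1..CARD('m)}) = DIM(real^'m)"
    using dim_eq_card_independent[OF orthonormal_on_independent[OF assms(1)]]
      card_image[OF orthonormal_on_inj[OF assms(1)]] by simp
  then have "span (v ` {1..CARD('m)}) = UNIV" by (rule dim_eq_full[THEN iffD1])
  then have "x = (\<Sum>i=1..CARD('m). (v i \<bullet> x) *\<^sub>R v i)"
    using span_orthonormal_expansion[OF assms(1) finite_atLeastAtMost, of x] by simp
  then have "B *v x = (\<Sum>i=1..CARD('m). (v i \<bullet> x) *\<^sub>R (B *v v i))"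
    by (metis (no_types, lifting) matrix_vector_mult_scaleR sum.cong vec.sum)
  also have "\<dots> = (\<Sum>i=1..p. (v i \<bullet> x) *\<^sub>R (B *v v i))"
    using assms(2,4) by (intro sum.mono_neutral_right) auto
  also have "\<dots> = (\<Sum>i=1..p. (s i * (v i \<bullet> x)) *\<^sub>R u i)"
    using assms(3) by (intro sum.cong) auto
  finally show "B *v x = (\<Sum>i=1..p. s i *\<^sub>R outer_prod (u i) (v i)) *v x"
    by (simp add: sum_outer_prod_mult_vec)
qed

lemma svd_exists:
  fixes B :: "real^'m^'k"
  shows "\<exists>s u v. is_svd B s u v"
proof -
  define p where "p = min CARD('k) CARD('m)"
  obtain v where greedy: "\<forall>i\<in>{1..CARD('m)}. greedy_max_direction ((*v) B) v i"
    using greedy_max_directions_exist[OF matrix_vector_mul_linear, of "CARD('m)" B] by auto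
  note v = greedy_max_directions_orthonormal[OF greedy]
    greedy_max_directions_norm_antimono[OF greedy]
    greedy_max_directions_images_orthogonal[OF greedy matrix_vector_mul_linear]
  have vanish: "B *v v i = 0" if "i \<in> {p<..CARD('m)}" for i
    using that by (intro orthogonal_antimono_family_vanishes[of "CARD('m)" "\<lambda>i. B *v v i"] v)
      (auto simp: p_def)
  have orth: "\<forall>i\<in>{1..p}. \<forall>j\<in>{1..p}. i \<noteq> j \<longrightarrow> (B *v v i) \<bullet> (B *v v j) = 0"
    using v(3) by (metis atLeastAtMost_iff inner_commute linorder_neqE_nat min.boundedE p_def order_trans)
  have "card {1..p} \<le> DIM(real^'k)" by (simp add: p_def)
  then obtain u where u: "orthonormal_on {1..p} u"
    "\<And>i. i \<in> {1..p} \<Longrightarrow> B *v v i = norm (B *v v i) *\<^sub>R u i"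
    using orthogonal_family_polar[OF finite_atLeastAtMost _ orth] by blast
  define s where "s i = (if i \<in> {1..p} then norm (B *v v i) else 0)" for i
  have "B = (\<Sum>i=1..p. s i *\<^sub>R outer_prod (u i) (v i))"
    using v(1) u(2) vanish by (intro matrix_eq_sum_outer_prod) (auto simp: s_def p_def)
  then have "is_svd B s u v"
    using u(1) v(1,2) orthonormal_on_subset[OF v(1), of "{1..p}"]
    unfolding is_svd_def Let_def p_def[symmetric]
    by (auto simp: s_def orthonormal_on_def p_def)
  then show ?thesis by blast
qed

lemma is_svd_sigma:
  fixes A :: "real^'m^'k"
  obtains u v where "is_svd A (sigma A) u v"
  using someI_ex[OF svd_exists[of A]] unfolding sigma_def by blast

section \<open>Singular value estimates\<close>

lemma is_svdD:
  fixes A :: "real^'m^'k"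
  assumes "is_svd A s u v"
  shows "orthonormal_on {1..min CARD('k) CARD('m)} v"
    and "0 \<le> s i"
    and "1 \<le> i \<Longrightarrow> i \<le> j \<Longrightarrow> s j \<le> s i"
    and "(norm (A *v x))\<^sup>2 = (\<Sum>i=1..min CARD('k) CARD('m). (s i * (v i \<bullet> x))\<^sup>2)"
proof -
  let ?p = "min CARD('k) CARD('m)"
  note svd = assms[unfolded is_svd_def Let_def]
  show "orthonormal_on {1..?p} v" using svd by (simp add: orthonormal_on_def)
  have zero: "s i = 0" if "i \<notin> {1..?p}" for i
    using svd that by (meson atLeastAtMost_iff not_le)
  show nonneg: "0 \<le> s i" for i
    using svd zero by (cases "i \<in> {1..?p}") auto
  show "s j \<le> s i" if "1 \<le> i" "i \<le> j"
    using svd that zero nonneg by (cases "j \<le> ?p") auto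
  have "orthonormal_on {1..?p} u" using svd by (simp add: orthonormal_on_def)
  moreover have "A *v x = (\<Sum>i=1..?p. (s i * (v i \<bullet> x)) *\<^sub>R u i)"
    using svd by (simp add: sum_outer_prod_mult_vec)
  ultimately show "(norm (A *v x))\<^sup>2 = (\<Sum>i=1..?p. (s i * (v i \<bullet> x))\<^sup>2)"
    using norm_sum_orthonormal[of "{1..?p}" u "\<lambda>i. s i * (v i \<bullet> x)"] by simp
qed

lemma is_svd_norm_mult_vec_le:
  fixes B :: "real^'m^'k"
  assumes svd: "is_svd B s u v" and orth: "\<forall>j\<in>{1..r}. v j \<bullet> x = 0"
  shows "norm (B *v x) \<le> s (r + 1) * norm x"
proof -
  let ?p = "min CARD('k) CARD('m)"
  have "(norm (B *v x))\<^sup>2 = (\<Sum>i=1..?p. (s i * (v i \<bullet> x))\<^sup>2)" by (rule is_svdD(4)[OF svd])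
  also have "\<dots> \<le> (\<Sum>i=1..?p. (s (r + 1))\<^sup>2 * (v i \<bullet> x)\<^sup>2)"
  proof (rule sum_mono)
    fix i assume "i \<in> {1..?p}"
    show "(s i * (v i \<bullet> x))\<^sup>2 \<le> (s (r + 1))\<^sup>2 * (v i \<bullet> x)\<^sup>2"
    proof (cases "i \<le> r")
      case True
      then show ?thesis using orth \<open>i \<in> {1..?p}\<close> by simp
    next
      case False
      then have "(s i)\<^sup>2 \<le> (s (r + 1))\<^sup>2"
        using is_svdD(2,3)[OF svd] by (simp add: power_mono)
      then show ?thesis by (simp add: power_mult_distrib mult_right_mono)
    qed
  qed
  also have "\<dots> = (s (r + 1))\<^sup>2 * (\<Sum>i=1..?p. (v i \<bullet> x)\<^sup>2)"
    by (simp add: sum_distrib_left)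
  also have "\<dots> \<le> (s (r + 1))\<^sup>2 * (norm x)\<^sup>2"
    by (rule mult_left_mono[OF bessel_inequality[OF is_svdD(1)[OF svd] finite_atLeastAtMost]]) simp
  also have "\<dots> = (s (r + 1) * norm x)\<^sup>2" by (simp add: power_mult_distrib)
  finally show ?thesis
    by (rule power2_le_imp_le) (simp add: is_svdD(2)[OF svd])
qed

lemma is_svd_norm_mult_vec_ge:
  fixes A :: "real^'m^'k"
  assumes svd: "is_svd A s u v" and "1 \<le> q" "q \<le> min CARD('k) CARD('m)"
    and x: "x \<in> span (v ` {1..q})"
  shows "s q * norm x \<le> norm (A *v x)"
proof -
  have on: "orthonormal_on {1..q} v"
    using orthonormal_on_subset[OF is_svdD(1)[OF svd]] assms(3) by auto
  have "(s q * norm x)\<^sup>2 = (\<Sum>i=1..q. (s q)\<^sup>2 * (v i \<bullet> x)\<^sup>2)"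
    using norm_span_orthonormal[OF on finite_atLeastAtMost x]
    by (simp add: power_mult_distrib sum_distrib_left)
  also have "\<dots> \<le> (\<Sum>i=1..q. (s i * (v i \<bullet> x))\<^sup>2)"
  proof (rule sum_mono)
    fix i assume "i \<in> {1..q}"
    then have "(s q)\<^sup>2 \<le> (s i)\<^sup>2" using is_svdD(2,3)[OF svd] by (simp add: power_mono)
    then show "(s q)\<^sup>2 * (v i \<bullet> x)\<^sup>2 \<le> (s i * (v i \<bullet> x))\<^sup>2"
      by (simp add: power_mult_distrib mult_right_mono)
  qed
  also have "\<dots> \<le> (\<Sum>i=1..min CARD('k) CARD('m). (s i * (v i \<bullet> x))\<^sup>2)"
    using assms(3) by (intro sum_mono2) auto
  also have "\<dots> = (norm (A *v x))\<^sup>2" using is_svdD(4)[OF svd] by simp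
  finally show ?thesis by (rule power2_le_imp_le) simp
qed

(* Bessel's inequality for the projections P a of the rows of C onto span (v ` I). *)
lemma sum_norm_mult_vec_le_orthonormal_span:
  fixes C :: "real^'m^'k" and v :: "'i \<Rightarrow> real^'m"
  assumes v: "orthonormal_on I v" "finite I"
    and X: "finite X" "orthonormal_on X id" "X \<subseteq> span (v ` I)"
  shows "(\<Sum>x\<in>X. (norm (C *v x))\<^sup>2) \<le> (\<Sum>i\<in>I. (norm (C *v v i))\<^sup>2)"
proof -
  define P where "P a = (\<Sum>i\<in>I. (v i \<bullet> C $ a) *\<^sub>R v i)" for a
  have row: "C $ a \<bullet> x = P a \<bullet> x" if "x \<in> X" for x a
  proof -
    have "x = (\<Sum>i\<in>I. (v i \<bullet> x) *\<^sub>R v i)"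
      using span_orthonormal_expansion[OF v] X(3) that by auto
    then have "C $ a \<bullet> x = (\<Sum>i\<in>I. (v i \<bullet> x) * (C $ a \<bullet> v i))"
      by (metis (no_types, lifting) inner_scaleR_right inner_sum_right sum.cong)
    also have "\<dots> = P a \<bullet> x"
      by (simp add: P_def inner_sum_left inner_sum_right inner_commute mult.commute)
    finally show ?thesis .
  qed
  have norm_sq: "(norm y)\<^sup>2 = (\<Sum>a\<in>UNIV. (y $ a)\<^sup>2)" for y :: "real^'k"
    unfolding power2_norm_eq_inner by (simp add: inner_vec_def power2_eq_square)
  have "(\<Sum>x\<in>X. (norm (C *v x))\<^sup>2) = (\<Sum>x\<in>X. \<Sum>a\<in>UNIV. (C $ a \<bullet> x)\<^sup>2)"
    by (simp add: norm_sq matrix_vector_mul_component)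
  also have "\<dots> = (\<Sum>x\<in>X. \<Sum>a\<in>UNIV. (id x \<bullet> P a)\<^sup>2)"
    by (intro sum.cong refl) (metis row id_apply inner_commute)
  also have "\<dots> = (\<Sum>a\<in>UNIV. \<Sum>x\<in>X. (id x \<bullet> P a)\<^sup>2)"
    by (rule sum.swap)
  also have "\<dots> \<le> (\<Sum>a\<in>UNIV. (norm (P a))\<^sup>2)"
    by (intro sum_mono bessel_inequality X(1,2))
  also have "\<dots> = (\<Sum>a\<in>UNIV. \<Sum>i\<in>I. (v i \<bullet> C $ a)\<^sup>2)"
    unfolding P_def by (intro sum.cong refl norm_sum_orthonormal v)
  also have "\<dots> = (\<Sum>i\<in>I. \<Sum>a\<in>UNIV. (C $ a \<bullet> v i)\<^sup>2)"
    by (subst sum.swap) (simp add: inner_commute)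
  also have "\<dots> = (\<Sum>i\<in>I. (norm (C *v v i))\<^sup>2)"
    by (simp add: norm_sq matrix_vector_mul_component)
  finally show ?thesis .
qed

lemma norm_mult_vec_perturbation_ge:
  fixes A B C :: "real^'m^'k"
  assumes "A = B + C" "is_svd A sA uA vA" "is_svd B sB uB vB"
    and "1 \<le> q" "q \<le> min CARD('k) CARD('m)" "x \<in> span (vA ` {1..q})"
    and "\<forall>j\<in>{1..r}. vB j \<bullet> x = 0"
  shows "(sA q - sB (r + 1)) * norm x \<le> norm (C *v x)"
proof -
  have "sA q * norm x \<le> norm (A *v x)"
    using assms(4-6) by (rule is_svd_norm_mult_vec_ge[OF assms(2)])
  also have "\<dots> \<le> norm (B *v x) + norm (C *v x)"
    unfolding assms(1) by (simp add: matrix_vector_mult_add_rdistrib norm_triangle_ineq)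
  also have "norm (B *v x) \<le> sB (r + 1) * norm x"
    using assms(7) by (rule is_svd_norm_mult_vec_le[OF assms(3)])
  finally show ?thesis by (simp add: left_diff_distrib)
qed

theorem lemma10:
  fixes A B C :: "real^'m^'k" and r :: nat and \<beta> :: real
    and u :: "nat \<Rightarrow> real^'k" and v :: "nat \<Rightarrow> real^'m"
  assumes "A = B + C"
    and "0 < r" and "2 * r \<le> min CARD('k) CARD('m)"
    and "is_svd A (sigma A) u v"
    and "0 \<le> \<beta>"
    and "sigma B (r + 1) \<le> \<beta>"
    and "\<forall>i\<in>{1..2 * r}. norm (C *v v i) \<le> 2 * \<beta>"
  shows "sigma A (2 * r) \<le> 4 * \<beta>"
proof (rule ccontr)
  define s where "s = sigma A (2 * r)"
  assume "\<not> sigma A (2 * r) \<le> 4 * \<beta>"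
  then have gap: "3 * \<beta> < s - \<beta>" by (simp add: s_def)
  obtain uB vB where svdB: "is_svd B (sigma B) uB vB" by (rule is_svd_sigma)
  have v: "orthonormal_on {1..2 * r} v"
    using orthonormal_on_subset[OF is_svdD(1)[OF assms(4)]] assms(3) by auto
  have "r + card (vB ` {1..r}) \<le> card {1..2 * r}"
    using card_image_le[of "{1..r}" vB] by simp
  then obtain X where X: "card X = r" "orthonormal_on X id" "X \<subseteq> span (v ` {1..2 * r})"
    "\<And>x w. x \<in> X \<Longrightarrow> w \<in> vB ` {1..r} \<Longrightarrow> w \<bullet> x = 0"
    using obtain_orthonormal_in_span_orthogonal[OF v] by blast
  have "finite X" using X(1) assms(2) card_gt_0_iff by blast
  have "s - \<beta> \<le> norm (C *v x)" if "x \<in> X" for x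
  proof -
    have "(s - sigma B (r + 1)) * norm x \<le> norm (C *v x)"
      unfolding s_def using assms(2,3) X(3,4) that
      by (intro norm_mult_vec_perturbation_ge[OF assms(1,4) svdB]) auto
    then show ?thesis using X(2) that assms(6) by (simp add: orthonormal_on_id_iff)
  qed
  then have "real r * (s - \<beta>)\<^sup>2 \<le> (\<Sum>x\<in>X. (norm (C *v x))\<^sup>2)"
    using X(1) gap assms(5) by (auto intro!: sum_bounded_below power_mono)
  also have "\<dots> \<le> (\<Sum>i\<in>{1..2 * r}. (norm (C *v v i))\<^sup>2)"
    using v \<open>finite X\<close> X(2,3) by (intro sum_norm_mult_vec_le_orthonormal_span) auto
  also have "\<dots> \<le> (\<Sum>i\<in>{1..2 * r}. (2 * \<beta>)\<^sup>2)"
    using assms(7) by (intro sum_mono power_mono) auto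
  also have "\<dots> = real r * (8 * \<beta>\<^sup>2)" by (simp add: power_mult_distrib)
  finally have "(s - \<beta>)\<^sup>2 \<le> 8 * \<beta>\<^sup>2" using assms(2) by simp
  moreover have "(3 * \<beta>)\<^sup>2 < (s - \<beta>)\<^sup>2" using gap assms(5) by (intro power_strict_mono) auto
  ultimately show False using zero_le_power2[of \<beta>] by (simp add: power_mult_distrib)
qed

end
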